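(* For any integers $k, m \ge 1$: if both $k$ and $m$ are even, then \[ 2O(k,m) = B(k,m) + B\!\left(\tfrac{k}{2}, \tfrac{m-2}{2}\right) - B\!\left(\tfrac{k}{2}, \tfrac{m}{2}\right) - B\!\left(\tfrac{k-2}{2}, \tfrac{m-2}{2}\right); \] otherwise, \[ 2O(k,m) = B(k,m) - 2B\!\left(\left\lfloor \tfrac{k}{2}\right\rfloor, \left\lfloor \tfrac{m-1}{2}\right\rfloor\right). \]
   Context: For $k \ge 1$, $m \ge 0$, $\mathcal{B}(k,m)$ is the set of binary words of length $m$ that avoid (do not contain as a not-necessarily-contiguous subsequence) every word $0^j1^{k-j}$, $j\in\{0,\dots,k\}$, and $B(k,m) = |\mathcal{B}(k,m)|$; also $B(0,m) = 0$ for all $m \ge 0$ (so $B(k,0)=1$ for $k\ge1$). For a binary word $w=w_1\cdots w_n$, $G(w)$ is the permutation of $[n]$ listing first the positions of zeros of $w$ in increasing order, then the positions of ones in increasing order; $w$ is odd if $G(w)$ has an odd number of inversions. $O(k,m)$ is the number of odd words in $\mathcal{B}(k,m)$. *)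

theory Defs
  imports Main "HOL-Library.Sublist"
begin

text \<open>Binary words are lists over the alphabet {0,1} (naturals 0 and 1).
  Subsequence containment is the library's (not necessarily contiguous) subseq.\<close>

definition binwords :: "nat \<Rightarrow> nat list set" where
  "binwords m = {w. length w = m \<and> set w \<subseteq> {0,1}}"

definition forb :: "nat \<Rightarrow> nat \<Rightarrow> nat list" where
  "forb k j = replicate j 0 @ replicate (k - j) 1"

definition Bset :: "nat \<Rightarrow> nat \<Rightarrow> nat list set" where
  "Bset k m = {w \<in> binwords m. \<forall>j\<in>{0..k}. \<not> subseq (forb k j) w}"

text \<open>B(0,m) = 0 by the paper's convention.\<close>
definition B :: "nat \<Rightarrow> nat \<Rightarrow> nat" where
  "B k m = (if k = 0 then 0 else card (Bset k m))"

definition G :: "nat list \<Rightarrow> nat list" where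
  "G w = filter (\<lambda>i. w ! (i - 1) = 0) [1..<length w + 1]
       @ filter (\<lambda>i. w ! (i - 1) = 1) [1..<length w + 1]"

definition inversions :: "nat list \<Rightarrow> nat" where
  "inversions p = card {(i, j). i < j \<and> j < length p \<and> p ! i > p ! j}"

definition odd_word :: "nat list \<Rightarrow> bool" where
  "odd_word w = odd (inversions (G w))"

definition Ocnt :: "nat \<Rightarrow> nat \<Rightarrow> nat" where
  "Ocnt k m = card {w \<in> Bset k m. odd_word w}"

end

theory Submission
  imports Defs "HOL-Library.Disjoint_Sets"
begin

text \<open>A word avoids all patterns 0^j 1^(k-j) iff at every cut the zeros before and the ones after
  it number fewer than k. The inversions of G(w) are the pairs of a 1 followed by a 0 in w, so
  2 O(k,m) = B(k,m) - (sum over w of (-1)^inv(w)). Cutting w into consecutive pairs (after its first letter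
  when the number of ones has the parity opposite to k) and swapping the first unequal pair is a
  sign-reversing involution of the avoiding words. Its fixed points are the stutterings
  u1 u1 u2 u2 ... of shorter words u1 u2 ..., padded with at most one letter at each end, and such a
  word avoids the patterns of length k iff u avoids those of length about k/2.\<close>

lemma subseq_replicate_iff: "subseq (replicate j a) xs \<longleftrightarrow> j \<le> count_list xs a"
proof (induction xs arbitrary: j)
  case (Cons x xs)
  show ?case
  proof (cases j)
    case (Suc i)
    then show ?thesis using Cons[of i] Cons[of j] by auto
  qed simp
qed (auto dest: list_emb_Nil2)

lemma subseq_replicate_append_replicate_iff:
  "subseq (replicate i a @ replicate j b) xs \<longleftrightarrow>
     (\<exists>p. i \<le> count_list (take p xs) a \<and> j \<le> count_list (drop p xs) b)"
proof
  assume "subseq (replicate i a @ replicate j b) xs"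
  then obtain us vs where "xs = us @ vs" "subseq (replicate i a) us" "subseq (replicate j b) vs"
    by (auto dest: list_emb_appendD)
  then show "\<exists>p. i \<le> count_list (take p xs) a \<and> j \<le> count_list (drop p xs) b"
    by (intro exI[of _ "length us"]) (simp add: subseq_replicate_iff)
next
  assume "\<exists>p. i \<le> count_list (take p xs) a \<and> j \<le> count_list (drop p xs) b"
  then obtain p where "i \<le> count_list (take p xs) a" "j \<le> count_list (drop p xs) b" by blast
  then have "subseq (replicate i a @ replicate j b) (take p xs @ drop p xs)"
    by (intro list_emb_append_mono) (simp_all add: subseq_replicate_iff)
  then show "subseq (replicate i a @ replicate j b) xs" by simp
qed

lemma Bset_iff_split_counts:
  "w \<in> Bset k m \<longleftrightarrow> length w = m \<and> set w \<subseteq> {0,1} \<and>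
     (\<forall>p\<le>length w. count_list (take p w) 0 + count_list (drop p w) 1 < k)"
proof -
  have "(\<exists>j\<in>{0..k}. subseq (forb k j) w) \<longleftrightarrow>
        (\<exists>p\<le>length w. k \<le> count_list (take p w) 0 + count_list (drop p w) 1)"
  proof
    assume "\<exists>j\<in>{0..k}. subseq (forb k j) w"
    then obtain j p where "j \<le> k" "j \<le> count_list (take p w) 0" "k - j \<le> count_list (drop p w) 1"
      unfolding forb_def subseq_replicate_append_replicate_iff by auto
    then show "\<exists>p\<le>length w. k \<le> count_list (take p w) 0 + count_list (drop p w) 1"
      by (intro exI[of _ "min p (length w)"]) (auto simp: min_def)
  next
    assume "\<exists>p\<le>length w. k \<le> count_list (take p w) 0 + count_list (drop p w) 1"
    then obtain p where "k \<le> count_list (take p w) 0 + count_list (drop p w) 1" by blast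
    then have "subseq (forb k (min k (count_list (take p w) 0))) w"
      unfolding forb_def subseq_replicate_append_replicate_iff by (intro exI[of _ p]) auto
    then show "\<exists>j\<in>{0..k}. subseq (forb k j) w" by (intro bexI) auto
  qed
  then show ?thesis unfolding Bset_def binwords_def mem_Collect_eq by (meson not_le)
qed

text \<open>The height of the walk starts at the number of ones and moves up at each 0 and down at each
  1, so after p letters it is the number of zeros before plus the number of ones after position p:
  the length of the longest forbidden pattern split there.\<close>

fun stays_below :: "int \<Rightarrow> int \<Rightarrow> nat list \<Rightarrow> bool" where
  "stays_below K h [] \<longleftrightarrow> h < K"
| "stays_below K h (x # w) \<longleftrightarrow> h < K \<and> stays_below K (if x = 0 then h + 1 else h - 1) w"

lemma stays_below_start: "stays_below K h w \<Longrightarrow> h < K"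
  by (cases w) auto

lemma stays_below_iff_prefixes:
  assumes "set w \<subseteq> {0,1}"
  shows "stays_below K h w \<longleftrightarrow>
    (\<forall>p\<le>length w. h + int (count_list (take p w) 0) - int (count_list (take p w) 1) < K)"
  using assms
proof (induction w arbitrary: h)
  case (Cons x w)
  have "(\<forall>p\<le>length (x # w). h + int (count_list (take p (x # w)) 0) - int (count_list (take p (x # w)) 1) < K)
    \<longleftrightarrow> h < K \<and> (\<forall>p\<le>length w. h + int (count_list (take (Suc p) (x # w)) 0)
                                    - int (count_list (take (Suc p) (x # w)) 1) < K)"
    (is "?all \<longleftrightarrow> ?h \<and> ?rest")
  proof (intro iffI conjI)
    assume ?all
    show ?h using \<open>?all\<close>[rule_format, of 0] by simp
    show ?rest using \<open>?all\<close> by auto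
  next
    assume hr: "?h \<and> ?rest"
    show ?all
    proof (intro allI impI)
      fix p assume "p \<le> length (x # w)"
      with hr show "h + int (count_list (take p (x # w)) 0) - int (count_list (take p (x # w)) 1) < K"
        by (cases p) auto
    qed
  qed
  then show ?case using Cons by (auto simp: algebra_simps)
qed simp

lemma stays_below_append:
  assumes "set w \<subseteq> {0,1}"
  shows "stays_below K h (w @ v) \<longleftrightarrow>
    stays_below K h w \<and> stays_below K (h + int (count_list w 0) - int (count_list w 1)) v"
  using assms
proof (induction w arbitrary: h)
  case (Cons x w)
  then have "x = 0 \<or> x = 1" "set w \<subseteq> {0,1}" by auto
  with Cons.IH show ?case by (auto simp: algebra_simps)
qed (auto dest: stays_below_start)

lemma mem_Bset_iff:
  "w \<in> Bset k m \<longleftrightarrow> length w = m \<and> set w \<subseteq> {0,1} \<and> stays_below (int k) (int (count_list w 1)) w"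
proof (cases "set w \<subseteq> {0,1}")
  case True
  have split_count: "count_list w 1 = count_list (take p w) 1 + count_list (drop p w) 1" for p
    by (metis append_take_drop_id count_list_append)
  have "stays_below (int k) (int (count_list w 1)) w \<longleftrightarrow>
      (\<forall>p\<le>length w. count_list (take p w) 0 + count_list (drop p w) 1 < k)"
    unfolding stays_below_iff_prefixes[OF True]
  proof (intro all_cong imp_cong refl)
    fix p show "int (count_list w 1) + int (count_list (take p w) 0) - int (count_list (take p w) 1) < int k
        \<longleftrightarrow> count_list (take p w) 0 + count_list (drop p w) 1 < k"
      using split_count[of p] by linarith
  qed
  then show ?thesis by (simp add: Bset_iff_split_counts)
qed (simp add: Bset_iff_split_counts)

lemma inversions_append_sorted:
  fixes xs ys :: "nat list"
  assumes "sorted xs" and "sorted ys"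
  shows "inversions (xs @ ys) = (\<Sum>x\<leftarrow>xs. length (filter (\<lambda>y. y < x) ys))"
proof -
  let ?n = "length xs"
  let ?T = "SIGMA i:{..<?n}. {j. j < length ys \<and> ys ! j < xs ! i}"
  have "{(i, j). i < j \<and> j < length (xs @ ys) \<and> (xs @ ys) ! i > (xs @ ys) ! j}
      = (\<lambda>(i, j). (i, j + ?n)) ` ?T" (is "?S = _")
  proof (intro equalityI subsetI)
    fix p assume "p \<in> ?S"
    then obtain i j where p: "p = (i, j)" "i < j" "j < ?n + length ys" "(xs @ ys) ! i > (xs @ ys) ! j"
      by auto
    have "i < ?n"
    proof (rule ccontr)
      assume "\<not> i < ?n"
      then have "ys ! (i - ?n) \<le> ys ! (j - ?n)" using p by (intro sorted_nth_mono[OF \<open>sorted ys\<close>]) auto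
      with p \<open>\<not> i < ?n\<close> show False by (auto simp: nth_append)
    qed
    moreover have "\<not> j < ?n"
    proof
      assume "j < ?n"
      then have "xs ! i \<le> xs ! j" using p by (intro sorted_nth_mono[OF \<open>sorted xs\<close>]) auto
      with p \<open>j < ?n\<close> \<open>i < ?n\<close> show False by (auto simp: nth_append)
    qed
    ultimately have "(i, j - ?n) \<in> ?T" and "p = (i, j - ?n + ?n)" using p by (auto simp: nth_append)
    then show "p \<in> (\<lambda>(i, j). (i, j + ?n)) ` ?T" by (metis (no_types, lifting) case_prod_conv image_eqI)
  qed (auto simp: nth_append)
  moreover have "inj_on (\<lambda>(i, j). (i, j + ?n)) ?T" by (auto simp: inj_on_def)
  ultimately have "inversions (xs @ ys) = card ?T" unfolding inversions_def by (simp add: card_image)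
  also have "\<dots> = (\<Sum>i<?n. length (filter (\<lambda>y. y < xs ! i) ys))"
    by (simp add: length_filter_conv_card)
  also have "\<dots> = (\<Sum>x\<leftarrow>xs. length (filter (\<lambda>y. y < x) ys))"
    by (simp add: sum_list_sum_nth atLeast0LessThan)
  finally show ?thesis .
qed

definition positions :: "nat \<Rightarrow> nat list \<Rightarrow> nat list" where
  "positions a w = filter (\<lambda>i. w ! (i - 1) = a) [1..<length w + 1]"

lemma G_eq_positions: "G w = positions 0 w @ positions 1 w"
  by (simp add: G_def positions_def)

lemma sorted_positions: "sorted (positions a w)"
  unfolding positions_def by (metis sorted_wrt_filter sorted_upt)

lemma positions_snoc: "positions a (w @ [x]) = positions a w @ (if x = a then [length w + 1] else [])"
proof -
  have "filter (\<lambda>i. (w @ [x]) ! (i - 1) = a) [1..<length w + 1] = positions a w"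
    unfolding positions_def by (rule filter_cong) (auto simp: nth_append)
  then show ?thesis by (simp add: positions_def nth_append)
qed

lemma set_positions: "set (positions a w) \<subseteq> {1..length w}"
  by (auto simp: positions_def)

lemma length_positions: "length (positions a w) = count_list w a"
  by (induction w rule: rev_induct) (auto simp: positions_snoc positions_def[of _ "[]"])

fun ones_before_zeros :: "nat list \<Rightarrow> nat" where
  "ones_before_zeros [] = 0"
| "ones_before_zeros (x # w) = (if x = 1 then count_list w 0 else 0) + ones_before_zeros w"

lemma ones_before_zeros_snoc:
  "ones_before_zeros (w @ [x]) = ones_before_zeros w + (if x = 0 then count_list w 1 else 0)"
  by (induction w) auto

lemma inversions_G: "inversions (G w) = ones_before_zeros w"
proof -
  have "(\<Sum>z\<leftarrow>positions 0 w. length (filter (\<lambda>y. y < z) (positions 1 w))) = ones_before_zeros w"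
  proof (induction w rule: rev_induct)
    case (snoc x w)
    have "filter (\<lambda>y. y < length w + 1) (positions 1 w) = positions 1 w"
      using set_positions[of 1 w] by (auto simp: filter_id_conv)
    moreover have "\<not> length w + 1 < z" if "z \<in> set (positions 0 w)" for z
      using that set_positions[of 0 w] by auto
    ultimately show ?case using snoc
      by (auto simp: positions_snoc ones_before_zeros_snoc length_positions cong: map_cong)
  qed (simp add: positions_def)
  then show ?thesis by (simp add: G_eq_positions inversions_append_sorted sorted_positions)
qed

lemma finite_Bset: "finite (Bset k m)"
proof (rule finite_subset)
  show "Bset k m \<subseteq> {w. set w \<subseteq> {0,1} \<and> length w = m}" by (auto simp: Bset_def binwords_def)
qed (rule finite_lists_length_eq, simp)

lemma B_eq_card_Bset: "B k m = card (Bset k m)"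
proof -
  have "Bset 0 m = {}" by (auto simp: mem_Bset_iff dest!: stays_below_start)
  then show ?thesis by (simp add: B_def)
qed

definition sign_word :: "nat list \<Rightarrow> int" where
  "sign_word w = (-1) ^ ones_before_zeros w"

lemma two_Ocnt_eq: "int (2 * Ocnt k m) = int (card (Bset k m)) - sum sign_word (Bset k m)"
proof -
  let ?O = "{w \<in> Bset k m. odd_word w}" and ?E = "{w \<in> Bset k m. \<not> odd_word w}"
  have sign: "sign_word w = (if odd_word w then -1 else 1)" for w
    by (simp add: sign_word_def odd_word_def inversions_G)
  have split: "Bset k m = ?E \<union> ?O" "?E \<inter> ?O = {}" and fin: "finite ?E" "finite ?O"
    using finite_Bset by auto
  have "card (Bset k m) = card ?E + card ?O"
    using card_Un_disjoint[OF fin] split by metis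
  moreover have "sum sign_word (Bset k m) = sum sign_word ?E + sum sign_word ?O"
    using sum.union_disjoint[OF fin] split by metis
  moreover have "sum sign_word ?E = int (card ?E)" "sum sign_word ?O = - int (card ?O)"
    by (simp_all add: sign)
  ultimately show ?thesis by (simp add: Ocnt_def)
qed

lemma sum_eq_sum_fixed_points:
  fixes f :: "'a \<Rightarrow> 'b::ab_group_add"
  assumes "finite A" and "\<And>x. x \<in> A \<Longrightarrow> h x \<in> A" and "\<And>x. x \<in> A \<Longrightarrow> h (h x) = x"
    and "\<And>x. x \<in> A \<Longrightarrow> h x \<noteq> x \<Longrightarrow> f (h x) = - f x"
  shows "sum f A = sum f {x \<in> A. h x = x}"
proof -
  have "sum f {x \<in> A. h x \<noteq> x} = 0"
    by (rule sum_involution_eq_0[where h = h]) (use assms in auto)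
  moreover have "sum f A = sum f {x \<in> A. h x = x} + sum f {x \<in> A. h x \<noteq> x}"
    using \<open>finite A\<close> by (subst sum.union_disjoint[symmetric]) (auto intro: sum.cong)
  ultimately show ?thesis by simp
qed

fun swap_first_pair :: "nat list \<Rightarrow> nat list" where
  "swap_first_pair (a # b # r) = (if a \<noteq> b then b # a # r else a # b # swap_first_pair r)"
| "swap_first_pair xs = xs"

fun paired :: "nat list \<Rightarrow> bool" where
  "paired (a # b # r) \<longleftrightarrow> a = b \<and> paired r"
| "paired xs \<longleftrightarrow> True"

lemma swap_first_pair_swap_first_pair [simp]: "swap_first_pair (swap_first_pair w) = w"
  by (induction w rule: swap_first_pair.induct) auto

lemma count_list_swap_first_pair [simp]: "count_list (swap_first_pair w) a = count_list w a"
  by (induction w rule: swap_first_pair.induct) auto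

lemma length_swap_first_pair [simp]: "length (swap_first_pair w) = length w"
  by (induction w rule: swap_first_pair.induct) auto

lemma set_swap_first_pair [simp]: "set (swap_first_pair w) = set w"
  by (induction w rule: swap_first_pair.induct) auto

lemma swap_first_pair_eq_iff_paired: "swap_first_pair w = w \<longleftrightarrow> paired w"
  by (induction w rule: swap_first_pair.induct) auto

lemma odd_ones_before_zeros_swap_first_pair:
  assumes "set w \<subseteq> {0,1}" and "swap_first_pair w \<noteq> w"
  shows "odd (ones_before_zeros (swap_first_pair w) + ones_before_zeros w)"
  using assms by (induction w rule: swap_first_pair.induct) (auto split: if_splits)

text \<open>Exchanging the letters of a pair only moves the height between the two letters by 2, and
  when the height before the pair has the parity of K it is at most K - 2.\<close>

lemma stays_below_swap_first_pair:
  assumes "set w \<subseteq> {0,1}" and "stays_below K h w" and "even (h + K)"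
  shows "stays_below K h (swap_first_pair w)"
  using assms
proof (induction w arbitrary: h rule: swap_first_pair.induct)
  case (1 a b r)
  show ?case
  proof (cases "a = b")
    case True
    then have "stays_below K (if a = 0 then h + 2 else h - 2) (swap_first_pair r)"
      using 1 by (intro "1.IH") (auto simp: algebra_simps split: if_splits)
    then show ?thesis using "1.prems" True by (auto simp: algebra_simps split: if_splits)
  next
    case False
    moreover have "h \<noteq> K - 1" using \<open>even (h + K)\<close> by presburger
    ultimately show ?thesis using "1.prems" by auto
  qed
qed auto

text \<open>The pairs are aligned so that the height before each pair has the parity of k: a word
  whose number of ones has the wrong parity keeps its first letter fixed.\<close>

definition flip :: "nat \<Rightarrow> nat list \<Rightarrow> nat list" where
  "flip k w = (if even (count_list w 1 + k) then swap_first_pair w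
               else case w of [] \<Rightarrow> [] | x # v \<Rightarrow> x # swap_first_pair v)"

lemma flip_flip [simp]: "flip k (flip k w) = w"
  by (auto simp: flip_def split: list.split)

lemma count_list_flip [simp]: "count_list (flip k w) a = count_list w a"
  by (auto simp: flip_def split: list.split)

lemma length_flip [simp]: "length (flip k w) = length w"
  by (auto simp: flip_def split: list.split)

lemma set_flip [simp]: "set (flip k w) = set w"
  by (cases w) (auto simp: flip_def)

lemma flip_eq_iff: "flip k w = w \<longleftrightarrow> (if even (count_list w 1 + k) then paired w else paired (tl w))"
  by (auto simp: flip_def swap_first_pair_eq_iff_paired split: list.split)

lemma sign_word_flip:
  assumes "set w \<subseteq> {0,1}" and "flip k w \<noteq> w"
  shows "sign_word (flip k w) = - sign_word w"
proof -
  have "odd (ones_before_zeros (flip k w) + ones_before_zeros w)"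
    using assms odd_ones_before_zeros_swap_first_pair
    by (cases w) (auto simp: flip_def split: if_splits)
  then show ?thesis by (auto simp: sign_word_def minus_one_power_iff)
qed

lemma flip_Bset:
  assumes "w \<in> Bset k m"
  shows "flip k w \<in> Bset k m"
proof -
  let ?h = "int (count_list w 1)"
  have w: "length w = m" "set w \<subseteq> {0,1}" "stays_below (int k) ?h w"
    using assms by (simp_all add: mem_Bset_iff)
  have "stays_below (int k) ?h (flip k w)"
  proof (cases "even (count_list w 1 + k)")
    case True
    then show ?thesis using w stays_below_swap_first_pair[of w "int k" ?h] by (simp add: flip_def)
  next
    case False
    show ?thesis
    proof (cases w)
      case (Cons x v)
      let ?h' = "if x = 0 then ?h + 1 else ?h - 1"
      have "x = 0 \<or> x = 1" "set v \<subseteq> {0,1}" using w Cons by auto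
      moreover have "even (?h' + int k)" using False by auto
      ultimately have "stays_below (int k) ?h' (swap_first_pair v)"
        using w Cons stays_below_swap_first_pair[of v "int k" ?h'] by auto
      then have "stays_below (int k) ?h (x # swap_first_pair v)"
        using stays_below_start[OF w(3)] by (simp only: stays_below.simps)
      moreover have "flip k w = x # swap_first_pair v" using Cons False by (simp add: flip_def)
      ultimately show ?thesis by simp
    qed (use w in \<open>simp add: flip_def\<close>)
  qed
  then show ?thesis using w by (simp add: mem_Bset_iff)
qed

lemma sum_sign_word_Bset: "sum sign_word (Bset k m) = sum sign_word {w \<in> Bset k m. flip k w = w}"
proof (rule sum_eq_sum_fixed_points)
  fix w assume "w \<in> Bset k m" "flip k w \<noteq> w"
  then show "sign_word (flip k w) = - sign_word w" by (intro sign_word_flip) (simp_all add: mem_Bset_iff)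
qed (simp_all add: finite_Bset flip_Bset)

definition stutter :: "nat list \<Rightarrow> nat list" where
  "stutter u = concat (map (\<lambda>x. [x, x]) u)"

lemma stutter_simps [simp]: "stutter [] = []" "stutter (x # u) = x # x # stutter u"
  by (simp_all add: stutter_def)

lemma length_stutter [simp]: "length (stutter u) = 2 * length u"
  by (induction u) auto

lemma count_list_stutter [simp]: "count_list (stutter u) a = 2 * count_list u a"
  by (induction u) auto

lemma set_stutter [simp]: "set (stutter u) = set u"
  by (induction u) auto

lemma inj_stutter: "inj stutter"
proof (rule injI)
  show "stutter u = stutter v \<Longrightarrow> u = v" for u v
  proof (induction u arbitrary: v)
    case Nil then show ?case by (cases v) auto
  next
    case Cons then show ?case by (cases v) auto
  qed
qed

lemma paired_iff_stutter: "paired w \<longleftrightarrow> (\<exists>u. w = stutter u \<or> (\<exists>y. w = stutter u @ [y]))"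
proof
  show "paired w \<Longrightarrow> \<exists>u. w = stutter u \<or> (\<exists>y. w = stutter u @ [y])"
  proof (induction w rule: paired.induct)
    case (1 a b r)
    then obtain u where "r = stutter u \<or> (\<exists>y. r = stutter u @ [y])" by auto
    with 1 show ?case by (intro exI[of _ "a # u"]) auto
  qed (auto intro: exI[of _ "[]"])
next
  have "paired (stutter u)" "paired (stutter u @ [y])" for u y by (induction u) auto
  then show "\<exists>u. w = stutter u \<or> (\<exists>y. w = stutter u @ [y]) \<Longrightarrow> paired w" by auto
qed

lemma ones_before_zeros_stutter: "ones_before_zeros (stutter u) = 4 * ones_before_zeros u"
  by (induction u) auto

text \<open>Each letter of u becomes a double step of stutter u, which halves heights and the bound.\<close>

lemma stays_below_stutter:
  assumes "set u \<subseteq> {0,1}"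
  shows "stays_below K (2 * h + c) (stutter u) \<longleftrightarrow> stays_below ((K - c + 1) div 2) h u"
  using assms
proof (induction u arbitrary: h)
  case (Cons x u)
  then have "x = 0 \<or> x = 1" "set u \<subseteq> {0,1}" by auto
  with Cons.IH[of "h + 1"] Cons.IH[of "h - 1"] show ?case
    by (auto simp: algebra_simps dest: stays_below_start)
qed auto

lemma stays_below_counts:
  assumes "set u \<subseteq> {0,1}" and "stays_below K (int (count_list u 1)) u"
  shows "int (count_list u 1) < K" and "int (count_list u 0) < K"
  using stays_below_start[OF assms(2)] assms(2)
    stays_below_append[OF assms(1), of K "int (count_list u 1)" "[]"]
  by auto

lemma stays_below_stutter_snoc:
  assumes "set u \<subseteq> {0,1}"
  shows "stays_below K (2 * h + c) (stutter u @ [y]) \<longleftrightarrow>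
    stays_below ((K - c + 1) div 2) h u \<and>
    stays_below K (2 * (h + int (count_list u 0) - int (count_list u 1)) + c) [y]"
proof -
  have "set (stutter u) \<subseteq> {0,1}" using assms by simp
  moreover have "2 * h + c + int (count_list (stutter u) 0) - int (count_list (stutter u) 1)
      = 2 * (h + int (count_list u 0) - int (count_list u 1)) + c"
    by simp
  ultimately show ?thesis by (simp only: stays_below_append stays_below_stutter[OF assms])
qed

lemma stays_below_Cons_stutter_snoc:
  assumes "set u \<subseteq> {0,1}" and "(if x = 0 then H + 1 else H - 1) = 2 * h + c"
  shows "stays_below K H (x # stutter u @ [y]) \<longleftrightarrow> H < K \<and>
    stays_below ((K - c + 1) div 2) h u \<and>
    stays_below K (2 * (h + int (count_list u 0) - int (count_list u 1)) + c) [y]"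
  by (simp only: stays_below.simps(2) assms(2) stays_below_stutter_snoc[OF assms(1)])

lemma int_eq_twice_div_two: "int k = 2 * int (k div 2) + (if even k then 0 else 1)"
  by (cases "even k") (auto elim!: evenE oddE)

lemma mem_Bset_stutter:
  assumes "even k"
  shows "stutter u \<in> Bset k (2 * n) \<longleftrightarrow> u \<in> Bset (k div 2) n"
proof -
  have "(int k + 1) div 2 = int (k div 2)" using assms int_eq_twice_div_two[of k] by auto
  then show ?thesis
    using stays_below_stutter[of u "int k" "int (count_list u 1)" 0] by (auto simp: mem_Bset_iff)
qed

lemma mem_Bset_stutter_snoc:
  "stutter u @ [if even k then 0 else 1] \<in> Bset k (2 * n + 1) \<longleftrightarrow> u \<in> Bset (k div 2) n"
proof (cases "set u \<subseteq> {0,1}")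
  case True
  let ?c = "if even k then 0 else 1"
  have "(int k - ?c + 1) div 2 = int (k div 2)" using int_eq_twice_div_two[of k] by auto
  then show ?thesis
    using stays_below_stutter_snoc[OF True, of "int k" "int (count_list u 1)" ?c "?c"]
      stays_below_counts[OF True, of "int (k div 2)"] int_eq_twice_div_two[of k] True
    by (auto simp: mem_Bset_iff)
qed (auto simp: mem_Bset_iff)

lemma mem_Bset_Cons_stutter:
  "(if even k then 1 else 0) # stutter u \<in> Bset k (2 * n + 1) \<longleftrightarrow> u \<in> Bset (k div 2) n"
proof (cases "set u \<subseteq> {0,1}")
  case True
  let ?c = "if even k then 0 else 1"
  have "(int k - ?c + 1) div 2 = int (k div 2)" using int_eq_twice_div_two[of k] by auto
  then show ?thesis
    using stays_below_stutter[OF True, of "int k" "int (count_list u 1)" ?c]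
      stays_below_counts[OF True, of "int (k div 2)"] int_eq_twice_div_two[of k] True
    by (auto simp: mem_Bset_iff)
qed (auto simp: mem_Bset_iff)

lemma mem_Bset_Cons_stutter_snoc_same:
  assumes "odd k" and "x = 0 \<or> x = 1"
  shows "x # stutter u @ [x] \<in> Bset k (2 * n + 2) \<longleftrightarrow> u \<in> Bset (k div 2) n"
proof (cases "set u \<subseteq> {0,1}")
  case True
  show ?thesis
    using stays_below_Cons_stutter_snoc[OF True, of x "int (count_list (x # stutter u @ [x]) 1)"
        "int (count_list u 1)" 1 "int k" x]
      stays_below_counts[OF True, of "int (k div 2)"] int_eq_twice_div_two[of k] True assms
    by (auto simp: mem_Bset_iff)
qed (auto simp: mem_Bset_iff)

lemma mem_Bset_Cons_stutter_snoc_10: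
  assumes "even k"
  shows "1 # stutter u @ [0] \<in> Bset k (2 * n + 2) \<longleftrightarrow> u \<in> Bset (k div 2) n"
proof (cases "set u \<subseteq> {0,1}")
  case True
  have "(int k + 1) div 2 = int (k div 2)" using assms int_eq_twice_div_two[of k] by auto
  then show ?thesis
    using stays_below_Cons_stutter_snoc[OF True, of 1 "int (count_list (1 # stutter u @ [0]) 1)"
        "int (count_list u 1)" 0 "int k" 0]
      stays_below_counts[OF True, of "int (k div 2)"] int_eq_twice_div_two[of k] True assms
    by (auto simp: mem_Bset_iff)
qed (auto simp: mem_Bset_iff)

lemma mem_Bset_Cons_stutter_snoc_01:
  assumes "even k" and "k \<ge> 1"
  shows "0 # stutter u @ [1] \<in> Bset k (2 * n + 2) \<longleftrightarrow> u \<in> Bset (k div 2 - 1) n"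
proof (cases "set u \<subseteq> {0,1}")
  case True
  have "(int k - 2 + 1) div 2 = int (k div 2 - 1)" using assms int_eq_twice_div_two[of k] by auto
  then show ?thesis
    using stays_below_Cons_stutter_snoc[OF True, of 0 "int (count_list (0 # stutter u @ [1]) 1)"
        "int (count_list u 1)" 2 "int k" 1]
      stays_below_counts[OF True, of "int (k div 2 - 1)"] int_eq_twice_div_two[of k] True assms
    by (auto simp: mem_Bset_iff)
qed (auto simp: mem_Bset_iff)

lemma flip_eq_self_odd_length:
  assumes "length w = 2 * n + 1" and "set w \<subseteq> {0,1}"
  shows "flip k w = w \<longleftrightarrow>
    (\<exists>u. w = stutter u @ [if even k then 0 else 1] \<or> w = (if even k then 1 else 0) # stutter u)"
proof (cases "even (count_list w 1 + k)")
  case True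
  have "paired w \<longleftrightarrow> (\<exists>u y. w = stutter u @ [y])"
    using assms(1) by (auto simp: paired_iff_stutter) presburger
  also have "\<dots> \<longleftrightarrow> (\<exists>u. w = stutter u @ [if even k then 0 else 1])"
    using True assms(2) by auto
  finally show ?thesis using True by (auto simp: flip_eq_iff)
next
  case False
  obtain x v where w: "w = x # v" using assms(1) by (cases w) auto
  have "paired v \<longleftrightarrow> (\<exists>u. v = stutter u)"
    using assms(1) w by (auto simp: paired_iff_stutter) presburger
  then have "paired (tl w) \<longleftrightarrow> (\<exists>u. w = (if even k then 1 else 0) # stutter u)"
    using False assms(2) w by auto
  then show ?thesis using False by (auto simp: flip_eq_iff)
qed

lemma flip_eq_self_even_length:
  assumes "length w = 2 * n + 2"
  shows "flip k w = w \<longleftrightarrow>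
    (if even (count_list w 1 + k) then \<exists>u. w = stutter u else \<exists>u x y. w = x # stutter u @ [y])"
proof -
  have "paired w \<longleftrightarrow> (\<exists>u. w = stutter u)"
    using assms by (auto simp: paired_iff_stutter) presburger
  moreover have "paired (tl w) \<longleftrightarrow> (\<exists>u x y. w = x # stutter u @ [y])"
    using assms by (cases w) (auto simp: paired_iff_stutter, presburger)
  ultimately show ?thesis by (simp add: flip_eq_iff)
qed

lemma flip_eq_self_even_length_odd_k:
  assumes "length w = 2 * n + 2" and "set w \<subseteq> {0,1}" and "odd k"
  shows "flip k w = w \<longleftrightarrow> (\<exists>u x. w = x # stutter u @ [x])"
  using assms by (auto simp: flip_eq_self_even_length)

lemma flip_eq_self_even_length_even_k:
  assumes "length w = 2 * n + 2" and "set w \<subseteq> {0,1}" and "even k"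
  shows "flip k w = w \<longleftrightarrow> (\<exists>u. w = stutter u \<or> w = 0 # stutter u @ [1] \<or> w = 1 # stutter u @ [0])"
  using assms by (auto simp: flip_eq_self_even_length)

lemma sign_word_stutter [simp]: "sign_word (stutter u) = 1"
  by (simp add: sign_word_def ones_before_zeros_stutter)

lemma sign_word_stutter_snoc [simp]: "sign_word (stutter u @ [y]) = 1"
  by (simp add: sign_word_def ones_before_zeros_snoc ones_before_zeros_stutter)

lemma sign_word_Cons_stutter [simp]: "sign_word (x # stutter u) = 1"
  by (simp add: sign_word_def ones_before_zeros_stutter)

lemma sign_word_Cons_stutter_snoc [simp]:
  "sign_word (x # stutter u @ [y]) = (if x = 1 \<and> y = 0 then -1 else 1)"
  by (simp add: sign_word_def ones_before_zeros_snoc ones_before_zeros_stutter)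

lemma sum_image_inj_const:
  assumes "inj f" and "\<And>x. g (f x) = c"
  shows "sum g (f ` A) = of_nat (card A) * c"
  using assms by (simp add: sum.reindex inj_on_subset)

lemma inj_Cons_stutter_snoc: "inj (\<lambda>u. x # stutter u @ [y])"
  using inj_stutter by (auto simp: inj_def)

lemma mem_BsetD: "w \<in> Bset k m \<Longrightarrow> length w = m \<and> set w \<subseteq> {0,1}"
  by (simp add: mem_Bset_iff)

lemma sum_sign_word_fixed_odd_length:
  "sum sign_word {w \<in> Bset k (2 * n + 1). flip k w = w} = 2 * int (card (Bset (k div 2) n))"
proof -
  let ?S = "\<lambda>u. stutter u @ [if even k then 0 else 1]"
    and ?C = "\<lambda>u. (if even k then 1 else 0) # stutter u"
  have "{w \<in> Bset k (2 * n + 1). flip k w = w} = ?S ` Bset (k div 2) n \<union> ?C ` Bset (k div 2) n"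
  proof (intro equalityI subsetI)
    fix w assume "w \<in> {w \<in> Bset k (2 * n + 1). flip k w = w}"
    then have w: "w \<in> Bset k (2 * n + 1)" "flip k w = w" by simp_all
    then obtain u where "w = ?S u \<or> w = ?C u"
      using flip_eq_self_odd_length[of w n k] mem_BsetD[of w] by blast
    with w show "w \<in> ?S ` Bset (k div 2) n \<union> ?C ` Bset (k div 2) n"
      using mem_Bset_stutter_snoc[of u k n] mem_Bset_Cons_stutter[of k u n] by blast
  next
    fix w assume "w \<in> ?S ` Bset (k div 2) n \<union> ?C ` Bset (k div 2) n"
    then obtain u where "u \<in> Bset (k div 2) n" "w = ?S u \<or> w = ?C u" by blast
    then have "w \<in> Bset k (2 * n + 1)"
      using mem_Bset_stutter_snoc[of u k n] mem_Bset_Cons_stutter[of k u n] by blast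
    moreover from this have "flip k w = w"
      using flip_eq_self_odd_length[of w n k] mem_BsetD[of w] \<open>w = ?S u \<or> w = ?C u\<close> by blast
    ultimately show "w \<in> {w \<in> Bset k (2 * n + 1). flip k w = w}" by simp
  qed
  moreover have "?S u \<noteq> ?C v" for u v
  proof
    assume "?S u = ?C v"
    then have "count_list (?S u) 1 = count_list (?C v) 1" by (rule arg_cong)
    then show False by (cases "even k") (simp_all, presburger+)
  qed
  then have "?S ` Bset (k div 2) n \<inter> ?C ` Bset (k div 2) n = {}" by blast
  moreover have "inj ?S" "inj ?C" using inj_stutter by (auto simp: inj_def)
  ultimately show ?thesis
    by (simp add: sum.union_disjoint finite_Bset sum_image_inj_const)
qed

lemma sum_sign_word_fixed_even_length_odd_k:
  assumes "odd k"
  shows "sum sign_word {w \<in> Bset k (2 * n + 2). flip k w = w} = 2 * int (card (Bset (k div 2) n))"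
proof -
  let ?F = "\<lambda>x u. x # stutter u @ [x]"
  have mem: "?F x u \<in> Bset k (2 * n + 2) \<longleftrightarrow> x \<in> {0,1} \<and> u \<in> Bset (k div 2) n" for x u
    using mem_Bset_Cons_stutter_snoc_same[OF assms, of x u n] mem_BsetD[of "?F x u"] by auto
  have "{w \<in> Bset k (2 * n + 2). flip k w = w} = ?F 0 ` Bset (k div 2) n \<union> ?F 1 ` Bset (k div 2) n"
  proof (intro equalityI subsetI)
    fix w assume "w \<in> {w \<in> Bset k (2 * n + 2). flip k w = w}"
    then have w: "w \<in> Bset k (2 * n + 2)" "flip k w = w" by simp_all
    then obtain x u where "w = ?F x u"
      using flip_eq_self_even_length_odd_k[OF _ _ assms] mem_BsetD[OF w(1)] by blast
    with w show "w \<in> ?F 0 ` Bset (k div 2) n \<union> ?F 1 ` Bset (k div 2) n" using mem by auto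
  next
    fix w assume "w \<in> ?F 0 ` Bset (k div 2) n \<union> ?F 1 ` Bset (k div 2) n"
    then obtain x u where "w = ?F x u" "x \<in> {0,1}" "u \<in> Bset (k div 2) n" by blast
    then have "w \<in> Bset k (2 * n + 2)" using mem by simp
    moreover from this have "flip k w = w"
      using flip_eq_self_even_length_odd_k[OF _ _ assms] mem_BsetD \<open>w = ?F x u\<close> by blast
    ultimately show "w \<in> {w \<in> Bset k (2 * n + 2). flip k w = w}" by simp
  qed
  moreover have "?F 0 ` Bset (k div 2) n \<inter> ?F 1 ` Bset (k div 2) n = {}" by auto
  moreover have "sum sign_word (?F x ` Bset (k div 2) n) = int (card (Bset (k div 2) n))" for x
    by (simp add: sum_image_inj_const[OF inj_Cons_stutter_snoc])
  ultimately show ?thesis by (simp add: sum.union_disjoint finite_Bset)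
qed

lemma sum_sign_word_fixed_even_length_even_k:
  assumes "even k" and "k \<ge> 1"
  shows "sum sign_word {w \<in> Bset k (2 * n + 2). flip k w = w}
    = int (card (Bset (k div 2) (n + 1))) + int (card (Bset (k div 2 - 1) n)) - int (card (Bset (k div 2) n))"
proof -
  let ?F = "\<lambda>x y u. x # stutter u @ [y]"
  let ?D = "stutter ` Bset (k div 2) (n + 1)"
    and ?A = "?F 0 1 ` Bset (k div 2 - 1) n" and ?B = "?F 1 0 ` Bset (k div 2) n"
  have mem: "stutter u \<in> Bset k (2 * n + 2) \<longleftrightarrow> u \<in> Bset (k div 2) (n + 1)"
    "?F 0 1 u \<in> Bset k (2 * n + 2) \<longleftrightarrow> u \<in> Bset (k div 2 - 1) n"
    "?F 1 0 u \<in> Bset k (2 * n + 2) \<longleftrightarrow> u \<in> Bset (k div 2) n" for u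
    using mem_Bset_stutter[OF assms(1), of u "n + 1"] mem_Bset_Cons_stutter_snoc_01[OF assms, of u n]
      mem_Bset_Cons_stutter_snoc_10[OF assms(1), of u n] by simp_all
  have "{w \<in> Bset k (2 * n + 2). flip k w = w} = ?D \<union> (?A \<union> ?B)"
  proof (intro equalityI subsetI)
    fix w assume "w \<in> {w \<in> Bset k (2 * n + 2). flip k w = w}"
    then have w: "w \<in> Bset k (2 * n + 2)" "flip k w = w" by simp_all
    then obtain u where "w = stutter u \<or> w = ?F 0 1 u \<or> w = ?F 1 0 u"
      using flip_eq_self_even_length_even_k[OF _ _ assms(1)] mem_BsetD[OF w(1)] by blast
    with w show "w \<in> ?D \<union> (?A \<union> ?B)" using mem by blast
  next
    fix w assume "w \<in> ?D \<union> (?A \<union> ?B)"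
    then obtain u where "w = stutter u \<or> w = ?F 0 1 u \<or> w = ?F 1 0 u" and "w \<in> Bset k (2 * n + 2)"
      using mem by blast
    moreover from this have "flip k w = w"
      using flip_eq_self_even_length_even_k[OF _ _ assms(1)] mem_BsetD by blast
    ultimately show "w \<in> {w \<in> Bset k (2 * n + 2). flip k w = w}" by simp
  qed
  moreover have "stutter u \<noteq> ?F x y v" if "x \<noteq> y" "x \<in> {0,1}" "y \<in> {0,1}" for x y u v
  proof
    assume "stutter u = ?F x y v"
    then have "count_list (stutter u) 1 = count_list (?F x y v) 1" by (rule arg_cong)
    with that show False by auto presburger+
  qed
  then have "?D \<inter> (?A \<union> ?B) = {}" "?A \<inter> ?B = {}" by auto
  moreover have "sum sign_word ?D = int (card (Bset (k div 2) (n + 1)))"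
    using inj_stutter by (simp add: sum_image_inj_const)
  moreover have "sum sign_word ?A = int (card (Bset (k div 2 - 1) n))"
    "sum sign_word ?B = - int (card (Bset (k div 2) n))"
    by (simp_all add: sum_image_inj_const[OF inj_Cons_stutter_snoc])
  ultimately show ?thesis by (simp add: sum.union_disjoint finite_Bset)
qed

theorem theorem4p4:
  fixes k m :: nat
  assumes "k \<ge> 1" and "m \<ge> 1"
  shows "(even k \<and> even m \<longrightarrow>
           int (2 * Ocnt k m) = int (B k m) + int (B (k div 2) ((m - 2) div 2))
                             - int (B (k div 2) (m div 2)) - int (B ((k - 2) div 2) ((m - 2) div 2)))
       \<and> (\<not> (even k \<and> even m) \<longrightarrow>
           int (2 * Ocnt k m) = int (B k m) - 2 * int (B (k div 2) ((m - 1) div 2)))"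
proof -
  have O: "int (2 * Ocnt k m) = int (B k m) - sum sign_word {w \<in> Bset k m. flip k w = w}"
    using two_Ocnt_eq[of k m] sum_sign_word_Bset[of k m] B_eq_card_Bset[of k m] by linarith
  define n where "n = (m - 1) div 2"
  have "m = 2 * n + 1 \<or> m = 2 * n + 2" using \<open>m \<ge> 1\<close> unfolding n_def by presburger
  then show ?thesis
  proof
    assume "m = 2 * n + 1"
    then show ?thesis using O sum_sign_word_fixed_odd_length[of k n] by (simp add: B_eq_card_Bset)
  next
    assume "m = 2 * n + 2"
    moreover have "(k - 2) div 2 = k div 2 - 1" by simp
    ultimately show ?thesis
      using O sum_sign_word_fixed_even_length_odd_k[of k n]
        sum_sign_word_fixed_even_length_even_k[OF _ assms(1), of n]
      by (cases "even k") (simp_all add: B_eq_card_Bset)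
  qed
qed

end
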